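(* Under the standing assumptions, for every $j$ with $1\le j\le n-1$ and every $z\in\mathbb C$, \begin{align*} \widehat\alpha_2^{(2j)}(z)&=\widehat\alpha_2^{(2j-2)}(z)+(z-a)\,Q_{2,j}^*(\bar z)\,\widehat H_{2,j}^{-1}\,P_{2,j}(a),\\ \widehat\beta_2^{(2j)}(z)&=\widehat\beta_2^{(2j-2)}(z)+(z-a)\,Q_{2,j}^*(\bar z)\,\widehat H_{2,j}^{-1}\,Q_{2,j}(a),\\ \widehat\gamma_2^{(2j)}(z)&=\widehat\gamma_2^{(2j-2)}(z)-(z-a)\,P_{2,j}^*(\bar z)\,\widehat H_{2,j}^{-1}\,P_{2,j}(a),\\ \widehat\delta_2^{(2j)}(z)&=\widehat\delta_2^{(2j-2)}(z)-(z-a)\,P_{2,j}^*(\bar z)\,\widehat H_{2,j}^{-1}\,Q_{2,j}(a). \end{align*}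
   Context: Let $q,n\in\mathbb N$ and let $a<b$ be real numbers. All matrices are complex; $I_q$, $0_q$ are the $q\times q$ identity and zero matrices; for a matrix-valued function $F$, $F^*(\bar z)$ means $(F(\bar z))^*$. Let $s_0,\dots,s_{2n+1}$ be Hermitian $q\times q$ matrices and set $\widehat s_j:=-ab\,s_j+(a+b)s_{j+1}-s_{j+2}$. Define the block Hankel matrices $H_{1,j}:=(s_{l+k})_{l,k=0}^{j}$, $H_{2,j}:=(\widehat s_{l+k})_{l,k=0}^{j}$, $K_{1,j}:=(bs_{l+k}-s_{l+k+1})_{l,k=0}^{j}$, $K_{2,j}:=(-as_{l+k}+s_{l+k+1})_{l,k=0}^{j}$. Standing assumption: $H_{1,n},H_{2,n-1},K_{1,n},K_{2,n}$ are positive definite. Let $T_0:=0_q$ and, for $j\ge1$, let $T_j$ be the $(j+1)\times(j+1)$ block matrix (blocks of size $q\times q$) with $I_q$ in the block positions $(l+1,l)$, $l=0,\dots,j-1$, and $0_q$ elsewhere; $R_j(z):=(I_{(j+1)q}-zT_j)^{-1}$; $v_j:=\mathrm{col}(I_q,0_q,\dots,0_q)\in\mathbb C^{(j+1)q\times q}$. Let $u_{2,0}:=-(a+b)s_0+s_1$ and $u_{2,j}:=\mathrm{col}(u_{2,0},-\widehat s_0,\dots,-\widehat s_{j-1})\in\mathbb C^{(j+1)q\times q}$. For $j\ge1$ let $Y_{2,j}:=\mathrm{col}(\widehat s_j,\dots,\widehat s_{2j-1})$. Schur complements: $\widehat H_{2,0}:=\widehat s_0$, $\widehat H_{2,j}:=\widehat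 s_{2j}-Y_{2,j}^*H_{2,j-1}^{-1}Y_{2,j}$ ($j\ge1$). Polynomials: $P_{2,0}:=I_q$, $Q_{2,0}(z):=-(u_{2,0}+zs_0)$, and for $j\ge1$: $P_{2,j}(z):=(-Y_{2,j}^*H_{2,j-1}^{-1},\,I_q)R_j(z)v_j$, $Q_{2,j}(z):=-(-Y_{2,j}^*H_{2,j-1}^{-1},\,I_q)R_j(z)(u_{2,j}+zv_js_0)$. For $0\le j\le n-1$ the $2q\times 2q$ matrix polynomial $\widehat U_2^{(2j)}=\begin{pmatrix}\widehat\alpha_2^{(2j)}&\widehat\beta_2^{(2j)}\\ \widehat\gamma_2^{(2j)}&\widehat\delta_2^{(2j)}\end{pmatrix}$ is defined by $\widehat\alpha_2^{(2j)}(z)=I_q-(z-a)(u_{2,j}^*+zs_0v_j^* )R_j^*(\bar z)H_{2,j}^{-1}R_j(a)v_j$, $\widehat\beta_2^{(2j)}(z)=(z-a)\big(s_0+(u_{2,j}^*+zs_0v_j^* )R_j^*(\bar z)H_{2,j}^{-1}R_j(a)(u_{2,j}+av_js_0)\big)$, $\widehat\gamma_2^{(2j)}(z)=-(z-a)v_j^*R_j^*(\bar z)H_{2,j}^{-1}R_j(a)v_j$, $\widehat\delta_2^{(2j)}(z)=I_q+(z-a)v_j^*R_j^*(\bar z)H_{2,j}^{-1}R_j(a)(u_{2,j}+av_js_0)$. *)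

theory Defs
  imports "Jordan_Normal_Form.Schur_Decomposition"
begin

definition block_mat :: "nat \<Rightarrow> nat \<Rightarrow> nat \<Rightarrow> (nat \<Rightarrow> nat \<Rightarrow> complex mat) \<Rightarrow> complex mat" where
  "block_mat q m k f = mat (m*q) (k*q) (\<lambda>(r,c). f (r div q) (c div q) $$ (r mod q, c mod q))"

definition block_col :: "nat \<Rightarrow> nat \<Rightarrow> (nat \<Rightarrow> complex mat) \<Rightarrow> complex mat" where
  "block_col q m f = block_mat q m 1 (\<lambda>l k. f l)"

definition hcat :: "complex mat \<Rightarrow> complex mat \<Rightarrow> complex mat" where
  "hcat A B = mat (dim_row A) (dim_col A + dim_col B)
     (\<lambda>(i,k). if k < dim_col A then A $$ (i,k) else B $$ (i, k - dim_col A))"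

(* inverse of a square matrix (meaningful when it is invertible) *)
definition minv :: "complex mat \<Rightarrow> complex mat" where
  "minv A = (SOME B. B \<in> carrier_mat (dim_row A) (dim_row A) \<and>
                     A * B = 1\<^sub>m (dim_row A) \<and> B * A = 1\<^sub>m (dim_row A))"

definition hermitian :: "complex mat \<Rightarrow> bool" where
  "hermitian A \<longleftrightarrow> square_mat A \<and> mat_adjoint A = A"

definition pos_def :: "complex mat \<Rightarrow> bool" where
  "pos_def A \<longleftrightarrow> hermitian A \<and>
     (\<forall>x \<in> carrier_vec (dim_row A). x \<noteq> 0\<^sub>v (dim_row A) \<longrightarrow>
        Im (conjugate x \<bullet> (A *\<^sub>v x)) = 0 \<and> Re (conjugate x \<bullet> (A *\<^sub>v x)) > 0)"

definition shat :: "real \<Rightarrow> real \<Rightarrow> (nat \<Rightarrow> complex mat) \<Rightarrow> nat \<Rightarrow> complex mat" where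
  "shat a b s j = (- complex_of_real (a*b)) \<cdot>\<^sub>m s j + complex_of_real (a+b) \<cdot>\<^sub>m s (j+1) - s (j+2)"

definition H1 :: "nat \<Rightarrow> (nat \<Rightarrow> complex mat) \<Rightarrow> nat \<Rightarrow> complex mat" where
  "H1 q s j = block_mat q (j+1) (j+1) (\<lambda>l k. s (l+k))"

definition H2 :: "nat \<Rightarrow> real \<Rightarrow> real \<Rightarrow> (nat \<Rightarrow> complex mat) \<Rightarrow> nat \<Rightarrow> complex mat" where
  "H2 q a b s j = block_mat q (j+1) (j+1) (\<lambda>l k. shat a b s (l+k))"

definition K1 :: "nat \<Rightarrow> real \<Rightarrow> (nat \<Rightarrow> complex mat) \<Rightarrow> nat \<Rightarrow> complex mat" where
  "K1 q b s j = block_mat q (j+1) (j+1) (\<lambda>l k. complex_of_real b \<cdot>\<^sub>m s (l+k) - s (l+k+1))"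

definition K2 :: "nat \<Rightarrow> real \<Rightarrow> (nat \<Rightarrow> complex mat) \<Rightarrow> nat \<Rightarrow> complex mat" where
  "K2 q a s j = block_mat q (j+1) (j+1) (\<lambda>l k. (- complex_of_real a) \<cdot>\<^sub>m s (l+k) + s (l+k+1))"

definition Tm :: "nat \<Rightarrow> nat \<Rightarrow> complex mat" where
  "Tm q j = block_mat q (j+1) (j+1) (\<lambda>l k. if l = k + 1 then 1\<^sub>m q else 0\<^sub>m q q)"

definition Rm :: "nat \<Rightarrow> nat \<Rightarrow> complex \<Rightarrow> complex mat" where
  "Rm q j z = minv (1\<^sub>m ((j+1)*q) - z \<cdot>\<^sub>m Tm q j)"

definition vm :: "nat \<Rightarrow> nat \<Rightarrow> complex mat" where
  "vm q j = block_col q (j+1) (\<lambda>l. if l = 0 then 1\<^sub>m q else 0\<^sub>m q q)"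

definition u20 :: "real \<Rightarrow> real \<Rightarrow> (nat \<Rightarrow> complex mat) \<Rightarrow> complex mat" where
  "u20 a b s = (- complex_of_real (a+b)) \<cdot>\<^sub>m s 0 + s 1"

definition u2 :: "nat \<Rightarrow> real \<Rightarrow> real \<Rightarrow> (nat \<Rightarrow> complex mat) \<Rightarrow> nat \<Rightarrow> complex mat" where
  "u2 q a b s j = block_col q (j+1) (\<lambda>l. if l = 0 then u20 a b s else - shat a b s (l - 1))"

definition Y2 :: "nat \<Rightarrow> real \<Rightarrow> real \<Rightarrow> (nat \<Rightarrow> complex mat) \<Rightarrow> nat \<Rightarrow> complex mat" where
  "Y2 q a b s j = block_col q j (\<lambda>l. shat a b s (j + l))"

definition Hhat2 :: "nat \<Rightarrow> real \<Rightarrow> real \<Rightarrow> (nat \<Rightarrow> complex mat) \<Rightarrow> nat \<Rightarrow> complex mat" where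
  "Hhat2 q a b s j = (if j = 0 then shat a b s 0
     else shat a b s (2*j) - mat_adjoint (Y2 q a b s j) * minv (H2 q a b s (j-1)) * Y2 q a b s j)"

definition rowP :: "nat \<Rightarrow> real \<Rightarrow> real \<Rightarrow> (nat \<Rightarrow> complex mat) \<Rightarrow> nat \<Rightarrow> complex mat" where
  "rowP q a b s j = hcat (- (mat_adjoint (Y2 q a b s j) * minv (H2 q a b s (j-1)))) (1\<^sub>m q)"

definition P2 :: "nat \<Rightarrow> real \<Rightarrow> real \<Rightarrow> (nat \<Rightarrow> complex mat) \<Rightarrow> nat \<Rightarrow> complex \<Rightarrow> complex mat" where
  "P2 q a b s j z = (if j = 0 then 1\<^sub>m q else rowP q a b s j * Rm q j z * vm q j)"

definition Q2 :: "nat \<Rightarrow> real \<Rightarrow> real \<Rightarrow> (nat \<Rightarrow> complex mat) \<Rightarrow> nat \<Rightarrow> complex \<Rightarrow> complex mat" where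
  "Q2 q a b s j z = (if j = 0 then - (u20 a b s + z \<cdot>\<^sub>m s 0)
     else - (rowP q a b s j * Rm q j z * (u2 q a b s j + z \<cdot>\<^sub>m (vm q j * s 0))))"

definition Mid :: "nat \<Rightarrow> real \<Rightarrow> real \<Rightarrow> (nat \<Rightarrow> complex mat) \<Rightarrow> nat \<Rightarrow> complex \<Rightarrow> complex mat" where
  "Mid q a b s j z = mat_adjoint (Rm q j (cnj z)) * minv (H2 q a b s j) * Rm q j (complex_of_real a)"

definition Lrow :: "nat \<Rightarrow> real \<Rightarrow> real \<Rightarrow> (nat \<Rightarrow> complex mat) \<Rightarrow> nat \<Rightarrow> complex \<Rightarrow> complex mat" where
  "Lrow q a b s j z = mat_adjoint (u2 q a b s j) + z \<cdot>\<^sub>m (s 0 * mat_adjoint (vm q j))"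

definition Rcol :: "nat \<Rightarrow> real \<Rightarrow> real \<Rightarrow> (nat \<Rightarrow> complex mat) \<Rightarrow> nat \<Rightarrow> complex mat" where
  "Rcol q a b s j = u2 q a b s j + complex_of_real a \<cdot>\<^sub>m (vm q j * s 0)"

definition alpha2 :: "nat \<Rightarrow> real \<Rightarrow> real \<Rightarrow> (nat \<Rightarrow> complex mat) \<Rightarrow> nat \<Rightarrow> complex \<Rightarrow> complex mat" where
  "alpha2 q a b s j z = 1\<^sub>m q - (z - complex_of_real a) \<cdot>\<^sub>m
     (Lrow q a b s j z * Mid q a b s j z * vm q j)"

definition beta2 :: "nat \<Rightarrow> real \<Rightarrow> real \<Rightarrow> (nat \<Rightarrow> complex mat) \<Rightarrow> nat \<Rightarrow> complex \<Rightarrow> complex mat" where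
  "beta2 q a b s j z = (z - complex_of_real a) \<cdot>\<^sub>m
     (s 0 + Lrow q a b s j z * Mid q a b s j z * Rcol q a b s j)"

definition gamma2 :: "nat \<Rightarrow> real \<Rightarrow> real \<Rightarrow> (nat \<Rightarrow> complex mat) \<Rightarrow> nat \<Rightarrow> complex \<Rightarrow> complex mat" where
  "gamma2 q a b s j z = - ((z - complex_of_real a) \<cdot>\<^sub>m
     (mat_adjoint (vm q j) * Mid q a b s j z * vm q j))"

definition delta2 :: "nat \<Rightarrow> real \<Rightarrow> real \<Rightarrow> (nat \<Rightarrow> complex mat) \<Rightarrow> nat \<Rightarrow> complex \<Rightarrow> complex mat" where
  "delta2 q a b s j z = 1\<^sub>m q + (z - complex_of_real a) \<cdot>\<^sub>m
     (mat_adjoint (vm q j) * Mid q a b s j z * Rcol q a b s j)"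

end

theory Submission
  imports Defs
begin

text \<open>H_{2,j} has the block form [[H_{2,j-1}, Y_{2,j}], [Y_{2,j}^*, hat s_{2j}]], so the Schur
  complement formula gives H_{2,j}^{-1} = E H_{2,j-1}^{-1} E^* + W^* hat H_{2,j}^{-1} W, where E embeds
  the first j block coordinates and W = (-Y_{2,j}^* H_{2,j-1}^{-1}, I_q) is the row defining P_{2,j}
  and Q_{2,j}. The shift T_j compressed to the leading blocks is T_{j-1}, hence
  E^* R_j(z) = R_{j-1}(z) E^*; also E^* v_j = v_{j-1} and E^* u_{2,j} = u_{2,j-1}. Substituting this
  into the common factor R_j^*(conj z) H_{2,j}^{-1} R_j(a) of the four entries splits each entry
  into its predecessor plus a correction built from W R_j(w) v_j = P_{2,j}(w) and
  W R_j(w) (u_{2,j} + w v_j s_0) = -Q_{2,j}(w).\<close>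


lemma mat_adjoint_altdef:
  "mat_adjoint (A::complex mat) = mat (dim_col A) (dim_row A) (\<lambda>(i,k). cnj (A $$ (k,i)))"
  by (rule eq_matI) (auto simp: mat_adjoint_def mat_of_rows_def)

lemma dim_mat_adjoint [simp]:
  "dim_row (mat_adjoint (A::complex mat)) = dim_col A"
  "dim_col (mat_adjoint (A::complex mat)) = dim_row A"
  by (auto simp: mat_adjoint_altdef)

lemma mat_adjoint_carrier_mat [simp]:
  "(A::complex mat) \<in> carrier_mat n m \<Longrightarrow> mat_adjoint A \<in> carrier_mat m n"
  by (auto simp: mat_adjoint_altdef)

lemma index_mat_adjoint [simp]:
  "i < dim_col A \<Longrightarrow> k < dim_row A \<Longrightarrow> mat_adjoint (A::complex mat) $$ (i,k) = cnj (A $$ (k,i))"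
  by (auto simp: mat_adjoint_altdef)

lemma mat_adjoint_mat_adjoint [simp]: "mat_adjoint (mat_adjoint (A::complex mat)) = A"
  by (rule eq_matI) auto

lemma mat_adjoint_one [simp]: "mat_adjoint (1\<^sub>m n :: complex mat) = 1\<^sub>m n"
  by (rule eq_matI) auto

lemma mat_adjoint_mult:
  assumes "(A::complex mat) \<in> carrier_mat n m" "B \<in> carrier_mat m k"
  shows "mat_adjoint (A * B) = mat_adjoint B * mat_adjoint A"
  using assms by (intro eq_matI) (auto simp: scalar_prod_def row_def col_def intro!: sum.cong)

lemma mat_adjoint_add:
  "(A::complex mat) \<in> carrier_mat n m \<Longrightarrow> B \<in> carrier_mat n m \<Longrightarrow>
    mat_adjoint (A + B) = mat_adjoint A + mat_adjoint B"
  by (intro eq_matI) auto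

lemma mat_adjoint_minus:
  "(A::complex mat) \<in> carrier_mat n m \<Longrightarrow> B \<in> carrier_mat n m \<Longrightarrow>
    mat_adjoint (A - B) = mat_adjoint A - mat_adjoint B"
  by (intro eq_matI) auto

lemma mat_adjoint_uminus: "mat_adjoint (- (A::complex mat)) = - mat_adjoint A"
  by (intro eq_matI) auto

lemma mat_adjoint_smult: "mat_adjoint (c \<cdot>\<^sub>m (A::complex mat)) = cnj c \<cdot>\<^sub>m mat_adjoint A"
  by (intro eq_matI) auto

lemma conjugate_mult_mat_vec_scalar_prod:
  assumes B: "(B::complex mat) \<in> carrier_mat n k" and v: "v \<in> carrier_vec k" and x: "x \<in> carrier_vec n"
  shows "conjugate (B *\<^sub>v v) \<bullet> x = conjugate v \<bullet> (mat_adjoint B *\<^sub>v x)"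
proof -
  have "conjugate (B *\<^sub>v v) \<bullet> x = (\<Sum>i<n. (\<Sum>l<k. cnj (B $$ (i,l)) * cnj (v $ l)) * x $ i)"
    using B v x by (auto simp: scalar_prod_def mult_mat_vec_def row_def lessThan_atLeast0 intro!: sum.cong)
  also have "\<dots> = (\<Sum>l<k. cnj (v $ l) * (\<Sum>i<n. cnj (B $$ (i,l)) * x $ i))"
    by (simp add: sum_distrib_left sum_distrib_right sum.swap[of _ "{..<n}"] mult_ac)
  also have "\<dots> = conjugate v \<bullet> (mat_adjoint B *\<^sub>v x)"
    using B v x by (auto simp: scalar_prod_def mult_mat_vec_def row_def lessThan_atLeast0 intro!: sum.cong)
  finally show ?thesis .
qed

lemma minv_eqI:
  assumes A: "(A::complex mat) \<in> carrier_mat n n" and B: "B \<in> carrier_mat n n" and AB: "A * B = 1\<^sub>m n"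
  shows "minv A = B"
proof -
  have BA: "B * A = 1\<^sub>m n" using mat_mult_left_right_inverse[OF A B AB] .
  have "\<exists>X. X \<in> carrier_mat (dim_row A) (dim_row A) \<and> A * X = 1\<^sub>m (dim_row A) \<and> X * A = 1\<^sub>m (dim_row A)"
    using A B AB BA by auto
  from someI_ex[OF this] have X: "minv A \<in> carrier_mat n n" "minv A * A = 1\<^sub>m n"
    using A unfolding minv_def by auto
  have "minv A = minv A * (A * B)" using X AB by simp
  also have "\<dots> = (minv A * A) * B" using assoc_mult_mat[OF X(1) A B] by simp
  finally show ?thesis using X B by simp
qed

lemma minv_inverse:
  assumes A: "(A::complex mat) \<in> carrier_mat n n" and det: "det A \<noteq> 0"
  shows "minv A \<in> carrier_mat n n" "A * minv A = 1\<^sub>m n" "minv A * A = 1\<^sub>m n"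
proof -
  obtain B where B: "B \<in> carrier_mat n n" "A * B = 1\<^sub>m n"
    using det_non_zero_imp_unit[OF A det, of undefined] unfolding Units_def ring_mat_def by auto
  then show "minv A \<in> carrier_mat n n" "A * minv A = 1\<^sub>m n" "minv A * A = 1\<^sub>m n"
    using minv_eqI[OF A B] mat_mult_left_right_inverse[OF A B] by auto
qed

lemma det_nonzero_if_kernel_trivial:
  "(A::complex mat) \<in> carrier_mat n n \<Longrightarrow> (\<And>v. v \<in> carrier_vec n \<Longrightarrow> A *\<^sub>v v = 0\<^sub>v n \<Longrightarrow> v = 0\<^sub>v n)
    \<Longrightarrow> det A \<noteq> 0"
  using det_0_iff_vec_prod_zero by blast

lemma mat_adjoint_minv:
  assumes A: "(A::complex mat) \<in> carrier_mat n n" and det: "det A \<noteq> 0" and herm: "mat_adjoint A = A"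
  shows "mat_adjoint (minv A) = minv A"
proof -
  note inv = minv_inverse[OF A det]
  have "A * mat_adjoint (minv A) = 1\<^sub>m n"
    using mat_adjoint_mult[OF inv(1) A] inv(3) herm by simp
  then show ?thesis using minv_eqI[OF A] inv(1) by (metis mat_adjoint_carrier_mat)
qed


text \<open>Variants of the ring laws of \<open>complex mat\<close> whose side conditions are equations between
  dimensions rather than carrier memberships, so that the simplifier can discharge them.\<close>

lemma assoc_mult_dim:
  "dim_col A = dim_row B \<Longrightarrow> dim_col B = dim_row C \<Longrightarrow> (A::complex mat) * B * C = A * (B * C)"
  by (rule assoc_mult_mat[of A "dim_row A" "dim_col A" B "dim_col B" C "dim_col C"]) auto

lemma add_mult_distrib_dim:
  "dim_row A = dim_row B \<Longrightarrow> dim_col A = dim_col B \<Longrightarrow> dim_col A = dim_row C \<Longrightarrow>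
    ((A::complex mat) + B) * C = A * C + B * C"
  by (rule add_mult_distrib_mat[of A "dim_row A" "dim_col A"]) auto

lemma mult_add_distrib_dim:
  "dim_row B = dim_row C \<Longrightarrow> dim_col B = dim_col C \<Longrightarrow> dim_col A = dim_row B \<Longrightarrow>
    (A::complex mat) * (B + C) = A * B + A * C"
  by (rule mult_add_distrib_mat[of A "dim_row A" "dim_col A"]) auto

lemma minus_mult_distrib_dim:
  "dim_row A = dim_row B \<Longrightarrow> dim_col A = dim_col B \<Longrightarrow> dim_col A = dim_row C \<Longrightarrow>
    ((A::complex mat) - B) * C = A * C - B * C"
  by (rule minus_mult_distrib_mat[of A "dim_row A" "dim_col A"]) auto

lemma mult_minus_distrib_dim:
  "dim_row B = dim_row C \<Longrightarrow> dim_col B = dim_col C \<Longrightarrow> dim_col A = dim_row B \<Longrightarrow>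
    (A::complex mat) * (B - C) = A * B - A * C"
  by (rule mult_minus_distrib_mat[of A "dim_row A" "dim_col A"]) auto

lemma uminus_mult_left_dim: "dim_col A = dim_row B \<Longrightarrow> (- (A::complex mat)) * B = - (A * B)"
  by (rule uminus_mult_left_mat) auto

lemma uminus_mult_right_dim: "dim_col A = dim_row B \<Longrightarrow> (A::complex mat) * (- B) = - (A * B)"
  by (rule uminus_mult_right_mat) auto

lemma mult_smult_assoc_dim: "dim_col A = dim_row B \<Longrightarrow> (c \<cdot>\<^sub>m (A::complex mat)) * B = c \<cdot>\<^sub>m (A * B)"
  by (rule mult_smult_assoc_mat[of A "dim_row A" "dim_col A"]) auto

lemma mult_smult_distrib_dim: "dim_col A = dim_row B \<Longrightarrow> (A::complex mat) * (c \<cdot>\<^sub>m B) = c \<cdot>\<^sub>m (A * B)"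
  by (rule mult_smult_distrib[of A "dim_row A" "dim_col A"]) auto

lemma zero_add_dim: "dim_row A = nr \<Longrightarrow> dim_col A = nc \<Longrightarrow> 0\<^sub>m nr nc + (A::complex mat) = A"
  by (intro eq_matI) auto

lemma add_zero_dim: "dim_row A = nr \<Longrightarrow> dim_col A = nc \<Longrightarrow> (A::complex mat) + 0\<^sub>m nr nc = A"
  by (intro eq_matI) auto

lemma minus_zero_dim: "dim_row A = nr \<Longrightarrow> dim_col A = nc \<Longrightarrow> (A::complex mat) - 0\<^sub>m nr nc = A"
  by (intro eq_matI) auto

lemma minus_self_dim: "(A::complex mat) - A = 0\<^sub>m (dim_row A) (dim_col A)"
  by (intro eq_matI) auto

lemma mult_mat_vec_zero: "A *\<^sub>v 0\<^sub>v (dim_col A) = 0\<^sub>v (dim_row A)"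
  by (intro eq_vecI) (auto intro: scalar_prod_right_zero[of _ "dim_col A"])

lemmas mat_dim_simps = assoc_mult_dim add_mult_distrib_dim mult_add_distrib_dim minus_mult_distrib_dim
  mult_minus_distrib_dim uminus_mult_left_dim uminus_mult_right_dim mult_smult_assoc_dim
  mult_smult_distrib_dim zero_add_dim add_zero_dim minus_zero_dim minus_self_dim


definition embed_mat :: "nat \<Rightarrow> nat \<Rightarrow> nat \<Rightarrow> complex mat" where
  "embed_mat N k p = mat N k (\<lambda>(i,c). if i = p + c then 1 else 0)"

lemma embed_mat_carrier [simp]: "embed_mat N k p \<in> carrier_mat N k"
  by (simp add: embed_mat_def)

lemma dim_embed_mat [simp]: "dim_row (embed_mat N k p) = N" "dim_col (embed_mat N k p) = k"
  by (simp_all add: embed_mat_def)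

lemma col_embed_mat: "c < k \<Longrightarrow> p + k \<le> N \<Longrightarrow> col (embed_mat N k p) c = unit_vec N (p+c)"
  by (rule eq_vecI) (auto simp: embed_mat_def unit_vec_def)

lemma row_adjoint_embed_mat:
  "c < k \<Longrightarrow> p + k \<le> N \<Longrightarrow> row (mat_adjoint (embed_mat N k p)) c = unit_vec N (p+c)"
  by (rule eq_vecI) (auto simp: embed_mat_def unit_vec_def)

lemma mult_embed_mat:
  "A \<in> carrier_mat n N \<Longrightarrow> p + k \<le> N \<Longrightarrow> A * embed_mat N k p = mat n k (\<lambda>(r,c). A $$ (r, p+c))"
  by (intro eq_matI) (auto simp: col_embed_mat)

lemma adjoint_embed_mat_mult:
  assumes A: "A \<in> carrier_mat N n" and k: "p + k \<le> N"
  shows "mat_adjoint (embed_mat N k p) * A = mat k n (\<lambda>(r,c). A $$ (p+r, c))"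
proof (intro eq_matI)
  fix r c assume "r < dim_row (mat k n (\<lambda>(r,c). A $$ (p+r, c)))" "c < dim_col (mat k n (\<lambda>(r,c). A $$ (p+r, c)))"
  then have rc: "r < k" "c < n" by auto
  have "col A c \<in> carrier_vec N" using A by auto
  then show "(mat_adjoint (embed_mat N k p) * A) $$ (r, c) = mat k n (\<lambda>(r,c). A $$ (p+r, c)) $$ (r, c)"
    using rc A k by (simp add: row_adjoint_embed_mat)
qed (use A in auto)

lemma compress_embed_mat:
  assumes A: "A \<in> carrier_mat N N'" and "p + k \<le> N" "p' + k' \<le> N'"
  shows "mat_adjoint (embed_mat N k p) * A * embed_mat N' k' p' = mat k k' (\<lambda>(r,c). A $$ (p+r, p'+c))"
  using assms by (simp add: adjoint_embed_mat_mult mult_embed_mat[of _ k N']) (rule eq_matI; auto)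

lemma mult_adjoint_embed_mat:
  assumes A: "A \<in> carrier_mat n k" and k: "k \<le> N"
  shows "A * mat_adjoint (embed_mat N k 0) = mat n N (\<lambda>(r,c). if c < k then A $$ (r,c) else 0)"
proof (rule eq_matI)
  fix r c assume "r < dim_row (mat n N (\<lambda>(r,c). if c < k then A $$ (r,c) else 0))"
    "c < dim_col (mat n N (\<lambda>(r,c). if c < k then A $$ (r,c) else 0))"
  then have rc: "r < n" "c < N" by auto
  have col: "col (mat_adjoint (embed_mat N k 0)) c = (if c < k then unit_vec k c else 0\<^sub>v k)"
    using rc by (auto intro!: eq_vecI simp: embed_mat_def unit_vec_def)
  have "row A r \<in> carrier_vec k" using A by auto
  then show "(A * mat_adjoint (embed_mat N k 0)) $$ (r, c) = mat n N (\<lambda>(r,c). if c < k then A $$ (r,c) else 0) $$ (r, c)"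
    using rc A by (simp add: col)
qed (use A in auto)

lemma adjoint_embed_mat_mult_embed_mat:
  "p + k \<le> N \<Longrightarrow> p' + k' \<le> N \<Longrightarrow>
    mat_adjoint (embed_mat N k p) * embed_mat N k' p' = mat k k' (\<lambda>(r,c). if p + r = p' + c then 1 else 0)"
  by (subst adjoint_embed_mat_mult) (auto simp: embed_mat_def)

lemma embed_mat_orthonormal:
  assumes "m + q \<le> N"
  shows "mat_adjoint (embed_mat N m 0) * embed_mat N m 0 = 1\<^sub>m m"
    and "mat_adjoint (embed_mat N q m) * embed_mat N q m = 1\<^sub>m q"
    and "mat_adjoint (embed_mat N m 0) * embed_mat N q m = 0\<^sub>m m q"
    and "mat_adjoint (embed_mat N q m) * embed_mat N m 0 = 0\<^sub>m q m"
  using assms by (subst adjoint_embed_mat_mult_embed_mat; auto intro!: eq_matI)+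

lemma eq_mat_by_row_blocks:
  assumes N: "N = m + q" and A: "dim_row A = N" "dim_col A = k" and B: "dim_row B = N" "dim_col B = k"
    and upper: "mat_adjoint (embed_mat N m 0) * A = mat_adjoint (embed_mat N m 0) * B"
    and lower: "mat_adjoint (embed_mat N q m) * A = mat_adjoint (embed_mat N q m) * B"
  shows "A = B"
proof (rule eq_matI)
  fix i c assume i: "i < dim_row B" and c: "c < dim_col B"
  show "A $$ (i,c) = B $$ (i,c)"
  proof (cases "i < m")
    case True
    have "(mat_adjoint (embed_mat N m 0) * A) $$ (i,c) = (mat_adjoint (embed_mat N m 0) * B) $$ (i,c)"
      using upper by simp
    then show ?thesis using True i c A B N by (subst (asm) (1 2) adjoint_embed_mat_mult) (auto intro: carrier_matI)
  next
    case False
    have "(mat_adjoint (embed_mat N q m) * A) $$ (i-m,c) = (mat_adjoint (embed_mat N q m) * B) $$ (i-m,c)"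
      using lower by simp
    then show ?thesis using False i c A B N by (subst (asm) (1 2) adjoint_embed_mat_mult) (auto intro: carrier_matI)
  qed
qed (use A B in auto)

lemma eq_mat_by_col_blocks:
  assumes N: "N = m + q" and A: "dim_row A = k" "dim_col A = N" and B: "dim_row B = k" "dim_col B = N"
    and left: "A * embed_mat N m 0 = B * embed_mat N m 0"
    and right: "A * embed_mat N q m = B * embed_mat N q m"
  shows "A = B"
proof (rule eq_matI)
  fix i c assume i: "i < dim_row B" and c: "c < dim_col B"
  show "A $$ (i,c) = B $$ (i,c)"
  proof (cases "c < m")
    case True
    have "(A * embed_mat N m 0) $$ (i,c) = (B * embed_mat N m 0) $$ (i,c)" using left by simp
    then show ?thesis using True i c A B N by (subst (asm) (1 2) mult_embed_mat) (auto intro: carrier_matI)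
  next
    case False
    have "(A * embed_mat N q m) $$ (i,c-m) = (B * embed_mat N q m) $$ (i,c-m)" using right by simp
    then show ?thesis using False i c A B N by (subst (asm) (1 2) mult_embed_mat) (auto intro: carrier_matI)
  qed
qed (use A B in auto)

lemma hcat_eq_embed_mat:
  assumes N: "N = m + q" and A: "A \<in> carrier_mat k m" and B: "B \<in> carrier_mat k q"
  shows "hcat A B = A * mat_adjoint (embed_mat N m 0) + B * mat_adjoint (embed_mat N q m)"
proof (rule eq_mat_by_col_blocks[OF N])
  have dims [simp]: "dim_row A = k" "dim_col A = m" "dim_row B = k" "dim_col B = q" using A B by auto
  note orth [simp] = embed_mat_orthonormal[of m q N, simplified N]
  have "hcat A B * embed_mat N m 0 = A"
    by (subst mult_embed_mat[of _ k N]) (auto simp: N hcat_def intro!: eq_matI carrier_matI)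
  then show "hcat A B * embed_mat N m 0 = (A * mat_adjoint (embed_mat N m 0) + B * mat_adjoint (embed_mat N q m)) * embed_mat N m 0"
    by (simp add: mat_dim_simps N)
  have "hcat A B * embed_mat N q m = B"
    by (subst mult_embed_mat[of _ k N]) (auto simp: N hcat_def intro!: eq_matI carrier_matI)
  then show "hcat A B * embed_mat N q m = (A * mat_adjoint (embed_mat N m 0) + B * mat_adjoint (embed_mat N q m)) * embed_mat N q m"
    by (simp add: mat_dim_simps N)
qed (use A B N in \<open>auto simp: hcat_def\<close>)


section \<open>Inverse of a block matrix via the Schur complement\<close>

locale block_split =
  fixes N m q :: nat and H A Y S G :: "complex mat"
  assumes N: "N = m + q" and H: "H \<in> carrier_mat N N" and A: "A \<in> carrier_mat m m"
    and Y: "Y \<in> carrier_mat m q" and S: "S \<in> carrier_mat q q"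
    and upper_left: "mat_adjoint (embed_mat N m 0) * H * embed_mat N m 0 = A"
    and upper_right: "mat_adjoint (embed_mat N m 0) * H * embed_mat N q m = Y"
    and lower_left: "mat_adjoint (embed_mat N q m) * H * embed_mat N m 0 = mat_adjoint Y"
    and lower_right: "mat_adjoint (embed_mat N q m) * H * embed_mat N q m = S"
    and G: "G \<in> carrier_mat m m" and AG: "A * G = 1\<^sub>m m"
begin

abbreviation "E \<equiv> embed_mat N m 0"
abbreviation "F \<equiv> embed_mat N q m"

lemma dims [simp]:
  "dim_row H = N" "dim_col H = N" "dim_row A = m" "dim_col A = m" "dim_row Y = m" "dim_col Y = q"
  "dim_row S = q" "dim_col S = q" "dim_row G = m" "dim_col G = m"
  using H A Y S G by auto

lemma embed_orthonormal [simp]: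
  "mat_adjoint E * E = 1\<^sub>m m" "mat_adjoint F * F = 1\<^sub>m q"
  "mat_adjoint E * F = 0\<^sub>m m q" "mat_adjoint F * E = 0\<^sub>m q m"
  using embed_mat_orthonormal[of m q N] by (simp_all add: N)

lemma embed_cancel [simp]:
  "dim_row Z = m \<Longrightarrow> mat_adjoint E * (E * Z) = Z"
  "dim_row Z = q \<Longrightarrow> mat_adjoint F * (F * Z) = Z"
  "dim_row Z = q \<Longrightarrow> mat_adjoint E * (F * Z) = 0\<^sub>m m (dim_col Z)"
  "dim_row Z = m \<Longrightarrow> mat_adjoint F * (E * Z) = 0\<^sub>m q (dim_col Z)"
  "dim_row Z = m \<Longrightarrow> A * (G * Z) = Z"
  using embed_mat_orthonormal[of m q N] AG by (simp_all add: N flip: assoc_mult_dim)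

lemma blocks [simp]:
  "mat_adjoint E * (H * E) = A" "mat_adjoint E * (H * F) = Y"
  "mat_adjoint F * (H * E) = mat_adjoint Y" "mat_adjoint F * (H * F) = S"
  using upper_left upper_right lower_left lower_right by (simp_all add: mat_dim_simps)

lemma row_blocks:
  "mat_adjoint E * H = A * mat_adjoint E + Y * mat_adjoint F"
  "mat_adjoint F * H = mat_adjoint Y * mat_adjoint E + S * mat_adjoint F"
  by (rule eq_mat_by_col_blocks[OF N]; simp add: mat_dim_simps)+

lemma row_blocks_mult [simp]:
  assumes "dim_row Z = N"
  shows "mat_adjoint E * (H * Z) = A * (mat_adjoint E * Z) + Y * (mat_adjoint F * Z)"
    and "mat_adjoint F * (H * Z) = mat_adjoint Y * (mat_adjoint E * Z) + S * (mat_adjoint F * Z)"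
  using assms by (simp_all add: row_blocks mat_dim_simps flip: assoc_mult_dim)

lemma mult_schur_column: "H * (F - E * (G * Y)) = F * (S - mat_adjoint Y * (G * Y))"
  by (rule eq_mat_by_row_blocks[OF N]) (simp_all add: mat_dim_simps)

lemma schur_complement_inverse:
  assumes K: "K \<in> carrier_mat q q" and SK: "(S - mat_adjoint Y * (G * Y)) * K = 1\<^sub>m q"
  shows "H * (E * (G * mat_adjoint E)
      + (F - E * (G * Y)) * (K * (mat_adjoint F - mat_adjoint Y * (G * mat_adjoint E)))) = 1\<^sub>m N"
proof -
  define w where "w = F - E * (G * Y)"
  define w' where "w' = mat_adjoint F - mat_adjoint Y * (G * mat_adjoint E)"
  have [simp]: "dim_row K = q" "dim_col K = q" "dim_row w = N" "dim_col w = q" "dim_row w' = q" "dim_col w' = N"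
    using K by (auto simp: w_def w'_def)
  have HE: "H * (E * (G * mat_adjoint E)) = E * mat_adjoint E + F * (mat_adjoint Y * (G * mat_adjoint E))"
    by (rule eq_mat_by_row_blocks[OF N]) (simp_all add: mat_dim_simps)
  have "H * (w * (K * w')) = (H * w) * K * w'" by (simp add: assoc_mult_dim)
  also have "\<dots> = F * w'" using SK by (simp add: w_def mult_schur_column assoc_mult_dim)
  finally have Hw: "H * (w * (K * w')) = F * w'" .
  have "H * (E * (G * mat_adjoint E) + w * (K * w')) = 1\<^sub>m N"
  proof (rule eq_mat_by_row_blocks[OF N])
    have "mat_adjoint F * (H * (E * (G * mat_adjoint E) + w * (K * w'))) = mat_adjoint Y * (G * mat_adjoint E) + w'"
      by (simp add: mat_dim_simps HE Hw)
    also have "\<dots> = mat_adjoint F" by (rule eq_matI) (auto simp: w'_def)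
    finally show "mat_adjoint F * (H * (E * (G * mat_adjoint E) + w * (K * w'))) = mat_adjoint F * 1\<^sub>m N"
      by simp
  qed (simp_all add: mat_dim_simps HE Hw)
  then show ?thesis by (simp add: w_def w'_def)
qed

end


lemma pos_def_compression_kernel:
  assumes pd: "pos_def A" and A: "A \<in> carrier_mat N N" and nN: "n \<le> N"
    and v: "v \<in> carrier_vec n" and Av: "(mat_adjoint (embed_mat N n 0) * A * embed_mat N n 0) *\<^sub>v v = 0\<^sub>v n"
  shows "v = 0\<^sub>v n"
proof (rule ccontr)
  assume nz: "v \<noteq> 0\<^sub>v n"
  let ?E = "embed_mat N n 0"
  let ?y = "?E *\<^sub>v v"
  have y: "?y \<in> carrier_vec N" by (rule mult_mat_vec_carrier[OF embed_mat_carrier v])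
  have "mat_adjoint ?E *\<^sub>v ?y = (mat_adjoint ?E * ?E) *\<^sub>v v"
    using v nN by (subst assoc_mult_mat_vec[of _ n N _ n]) auto
  also have "\<dots> = v" using v nN embed_mat_orthonormal(1)[of n 0 N] by simp
  finally have "?y \<noteq> 0\<^sub>v N" using nz mult_mat_vec_zero[of "mat_adjoint ?E"] by auto
  then have pos: "Re (conjugate ?y \<bullet> (A *\<^sub>v ?y)) > 0"
    using pd A y unfolding pos_def_def by auto
  have EA: "mat_adjoint ?E * A \<in> carrier_mat n N" using A by auto
  have "(mat_adjoint ?E * A * ?E) *\<^sub>v v = (mat_adjoint ?E * A) *\<^sub>v ?y"
    by (rule assoc_mult_mat_vec[OF EA embed_mat_carrier v])
  also have "\<dots> = mat_adjoint ?E *\<^sub>v (A *\<^sub>v ?y)"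
    by (rule assoc_mult_mat_vec[OF _ A y]) auto
  finally have "(mat_adjoint ?E * A * ?E) *\<^sub>v v = mat_adjoint ?E *\<^sub>v (A *\<^sub>v ?y)" .
  then have "conjugate ?y \<bullet> (A *\<^sub>v ?y) = conjugate v \<bullet> 0\<^sub>v n"
    using Av conjugate_mult_mat_vec_scalar_prod[OF embed_mat_carrier v mult_mat_vec_carrier[OF A y]] by simp
  with pos v show False by simp
qed


section \<open>The Hankel matrices \<open>H\<^sub>2\<^sub>,\<^sub>j\<close>\<close>

lemma dim_block_mat [simp]:
  "dim_row (block_mat q m k f) = m * q" "dim_col (block_mat q m k f) = k * q"
  by (auto simp: block_mat_def)

lemma index_block_mat:
  "r < m * q \<Longrightarrow> c < k * q \<Longrightarrow> block_mat q m k f $$ (r,c) = f (r div q) (c div q) $$ (r mod q, c mod q)"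
  by (auto simp: block_mat_def)

lemma adjoint_embed_mat_block_col:
  "mat_adjoint (embed_mat ((j+1)*q) (j*q) 0) * block_col q (j+1) f = block_col q j f"
  by (subst adjoint_embed_mat_mult) (auto simp: block_col_def index_block_mat intro!: eq_matI)

lemma H2_carrier: "H2 q a b s j \<in> carrier_mat ((j+1)*q) ((j+1)*q)"
  unfolding H2_def by (auto simp: block_mat_def)

lemma index_H2: "r < (j+1)*q \<Longrightarrow> c < (j+1)*q \<Longrightarrow>
    H2 q a b s j $$ (r,c) = shat a b s (r div q + c div q) $$ (r mod q, c mod q)"
  unfolding H2_def by (simp add: index_block_mat)

lemma Y2_carrier: "Y2 q a b s j \<in> carrier_mat (j*q) q"
  unfolding Y2_def block_col_def by (auto simp: block_mat_def)

lemma index_Y2: "r < j*q \<Longrightarrow> c < q \<Longrightarrow> Y2 q a b s j $$ (r,c) = shat a b s (j + r div q) $$ (r mod q, c)"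
  unfolding Y2_def block_col_def by (simp add: index_block_mat)

lemma H2_leading_block:
  assumes "j \<le> j'"
  shows "mat_adjoint (embed_mat ((j'+1)*q) ((j+1)*q) 0) * H2 q a b s j' * embed_mat ((j'+1)*q) ((j+1)*q) 0
    = H2 q a b s j"
proof -
  have "r < q + j*q \<Longrightarrow> r < q + j'*q" for r using mult_le_mono1[OF assms, of q] by linarith
  then show ?thesis using assms H2_carrier[of q a b s j]
    by (subst compress_embed_mat[OF H2_carrier]) (auto simp: index_H2[simplified] intro!: eq_matI)
qed

abbreviation Elead :: "nat \<Rightarrow> nat \<Rightarrow> complex mat" where
  "Elead q j \<equiv> embed_mat ((j+1)*q) (j*q) 0"

abbreviation Elast :: "nat \<Rightarrow> nat \<Rightarrow> complex mat" where
  "Elast q j \<equiv> embed_mat ((j+1)*q) q (j*q)"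

locale hankel_data =
  fixes q n :: nat and a b :: real and s :: "nat \<Rightarrow> complex mat"
  assumes q: "q \<ge> 1" and s_dim: "\<And>k. k \<le> 2*n+1 \<Longrightarrow> s k \<in> carrier_mat q q"
    and s_herm: "\<And>k. k \<le> 2*n+1 \<Longrightarrow> hermitian (s k)"
begin

lemma shat_carrier: "k + 1 \<le> 2*n \<Longrightarrow> shat a b s k \<in> carrier_mat q q"
  using s_dim[of k] s_dim[of "k+1"] s_dim[of "k+2"] unfolding shat_def
  by (intro minus_carrier_mat add_carrier_mat smult_carrier_mat) auto

lemma mat_adjoint_shat: assumes k: "k + 1 \<le> 2*n" shows "mat_adjoint (shat a b s k) = shat a b s k"
proof -
  have c: "s k \<in> carrier_mat q q" "s (k+1) \<in> carrier_mat q q" "s (k+2) \<in> carrier_mat q q"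
    using s_dim k by auto
  have h: "mat_adjoint (s k) = s k" "mat_adjoint (s (k+1)) = s (k+1)" "mat_adjoint (s (k+2)) = s (k+2)"
    using s_herm k by (auto simp: hermitian_def)
  show ?thesis unfolding shat_def using c
    by (simp add: mat_adjoint_minus[of _ q q] mat_adjoint_add[of _ q q] mat_adjoint_smult h[simplified])
qed

lemma cnj_index_shat:
  "k + 1 \<le> 2*n \<Longrightarrow> x < q \<Longrightarrow> y < q \<Longrightarrow> cnj (shat a b s k $$ (x,y)) = shat a b s k $$ (y,x)"
  using mat_adjoint_shat[of k] shat_carrier[of k] index_mat_adjoint[of y "shat a b s k" x] by auto

lemma H2_upper_right_block:
  "mat_adjoint (Elead q j) * H2 q a b s j * Elast q j = Y2 q a b s j"
proof -
  have "c < q \<Longrightarrow> (j*q + c) div q = j" "c < q \<Longrightarrow> (j*q + c) mod q = c" for c by auto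
  then show ?thesis using Y2_carrier[of q a b s j]
    by (subst compress_embed_mat[OF H2_carrier]) (auto simp: index_H2[simplified] index_Y2 ac_simps intro!: eq_matI)
qed

lemma H2_lower_right_block:
  assumes "j < n"
  shows "mat_adjoint (Elast q j) * H2 q a b s j * Elast q j = shat a b s (2*j)"
proof -
  have "c < q \<Longrightarrow> (j*q + c) div q = j" "c < q \<Longrightarrow> (j*q + c) mod q = c" for c by auto
  moreover have "shat a b s (2*j) \<in> carrier_mat q q" using shat_carrier[of "2*j"] assms by simp
  ultimately show ?thesis
    by (subst compress_embed_mat[OF H2_carrier]) (auto simp: index_H2[simplified] mult_2 intro!: eq_matI)
qed

lemma H2_lower_left_block:
  assumes jn: "j < n"
  shows "mat_adjoint (Elast q j) * H2 q a b s j * Elead q j = mat_adjoint (Y2 q a b s j)"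
proof -
  have "H2 q a b s j $$ (j*q + r, c) = mat_adjoint (Y2 q a b s j) $$ (r, c)" if rc: "r < q" "c < j*q" for r c
  proof -
    have "c div q < j" using rc(2) by (simp add: less_mult_imp_div_less)
    moreover have "(j*q + r) div q = j" "(j*q + r) mod q = r" using rc(1) by auto
    ultimately show ?thesis using rc jn q Y2_carrier[of q a b s j]
      by (simp add: index_H2 index_Y2 cnj_index_shat[of "j + c div q" "c mod q" r])
  qed
  then show ?thesis using Y2_carrier[of q a b s j]
    by (subst compress_embed_mat[OF H2_carrier]) (auto intro!: eq_matI)
qed

end

locale pos_hankel_data = hankel_data +
  assumes pd2: "pos_def (H2 q a b s (n-1))"
begin

lemma H2_kernel_trivial:
  assumes j: "j < n" and v: "v \<in> carrier_vec ((j+1)*q)" and Hv: "H2 q a b s j *\<^sub>v v = 0\<^sub>v ((j+1)*q)"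
  shows "v = 0\<^sub>v ((j+1)*q)"
proof (rule pos_def_compression_kernel[OF pd2 _ _ v])
  have n: "n - 1 + 1 = n" using j by simp
  show "H2 q a b s (n-1) \<in> carrier_mat (n*q) (n*q)" using H2_carrier[of q a b s "n-1"] n by simp
  show "(j+1)*q \<le> n*q" using j by (intro mult_le_mono1) simp
  show "(mat_adjoint (embed_mat (n*q) ((j+1)*q) 0) * H2 q a b s (n-1) * embed_mat (n*q) ((j+1)*q) 0) *\<^sub>v v
      = 0\<^sub>v ((j+1)*q)"
    using H2_leading_block[of j "n-1" q a b s] j Hv by (simp add: n)
qed

lemma det_H2_nonzero: "j < n \<Longrightarrow> det (H2 q a b s j) \<noteq> 0"
  using det_nonzero_if_kernel_trivial[OF H2_carrier] H2_kernel_trivial by blast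

lemma mat_adjoint_H2: assumes j: "j < n" shows "mat_adjoint (H2 q a b s j) = H2 q a b s j"
proof -
  have n: "n - 1 + 1 = n" using j by simp
  let ?H = "H2 q a b s (n-1)" and ?E = "embed_mat (n*q) ((j+1)*q) 0"
  have H: "?H \<in> carrier_mat (n*q) (n*q)" using H2_carrier[of q a b s "n-1"] n by simp
  have herm: "mat_adjoint ?H = ?H" using pd2 by (simp add: pos_def_def hermitian_def)
  have EH: "mat_adjoint ?E * ?H \<in> carrier_mat ((j+1)*q) (n*q)" using H by auto
  have "mat_adjoint (mat_adjoint ?E * ?H * ?E) = mat_adjoint ?E * mat_adjoint (mat_adjoint ?E * ?H)"
    by (rule mat_adjoint_mult[OF EH embed_mat_carrier])
  also have "\<dots> = mat_adjoint ?E * (?H * ?E)"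
    using mat_adjoint_mult[of "mat_adjoint ?E" "(j+1)*q" "n*q" ?H "n*q"] H herm by simp
  also have "\<dots> = mat_adjoint ?E * ?H * ?E" using H by (simp add: assoc_mult_dim)
  finally have "mat_adjoint (mat_adjoint ?E * ?H * ?E) = mat_adjoint ?E * ?H * ?E" .
  then show ?thesis using H2_leading_block[of j "n-1" q a b s] j by (simp add: n)
qed

lemma mat_adjoint_minv_H2: "j < n \<Longrightarrow> mat_adjoint (minv (H2 q a b s j)) = minv (H2 q a b s j)"
  using mat_adjoint_minv[OF H2_carrier det_H2_nonzero mat_adjoint_H2] .

context
  fixes j assumes j1: "1 \<le> j" and jn: "j < n"
begin

lemma H2_block_split:
  "block_split ((j+1)*q) (j*q) q (H2 q a b s j) (H2 q a b s (j-1)) (Y2 q a b s j) (shat a b s (2*j))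
    (minv (H2 q a b s (j-1)))"
proof -
  have j: "j - 1 + 1 = j" "j - 1 < n" using j1 jn by auto
  show ?thesis
  proof
    show "H2 q a b s (j-1) \<in> carrier_mat (j*q) (j*q)" using H2_carrier[of q a b s "j-1"] j by simp
    show "mat_adjoint (Elead q j) * H2 q a b s j * Elead q j = H2 q a b s (j-1)"
      using H2_leading_block[of "j-1" j q a b s] j by simp
    show "H2 q a b s (j-1) * minv (H2 q a b s (j-1)) = 1\<^sub>m (j*q)"
         "minv (H2 q a b s (j-1)) \<in> carrier_mat (j*q) (j*q)"
      using minv_inverse[OF H2_carrier det_H2_nonzero[OF j(2)]] j by simp_all
  qed (use jn shat_carrier[of "2*j"] in \<open>auto simp: H2_carrier[simplified] Y2_carrier H2_upper_right_block[simplified]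
      H2_lower_left_block[simplified] H2_lower_right_block[simplified]\<close>)
qed

lemma minv_H2_pred_carrier: "minv (H2 q a b s (j-1)) \<in> carrier_mat (j*q) (j*q)"
  using minv_inverse(1)[OF H2_carrier det_H2_nonzero, of "j-1"] j1 jn by simp

lemma Hhat2_eq: "Hhat2 q a b s j = shat a b s (2*j) - mat_adjoint (Y2 q a b s j) * (minv (H2 q a b s (j-1)) * (Y2 q a b s j))"
  using j1 minv_H2_pred_carrier Y2_carrier[of q a b s j] by (auto simp: Hhat2_def assoc_mult_dim)

lemma Hhat2_carrier: "Hhat2 q a b s j \<in> carrier_mat q q"
  unfolding Hhat2_eq using minv_H2_pred_carrier Y2_carrier[of q a b s j] shat_carrier[of "2*j"] jn
  by (intro minus_carrier_mat mult_carrier_mat[of _ _ "j*q"]) auto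

lemma det_Hhat2_nonzero: "det (Hhat2 q a b s j) \<noteq> 0"
proof (rule det_nonzero_if_kernel_trivial[OF Hhat2_carrier])
  fix v assume v: "v \<in> carrier_vec q" and Hv: "Hhat2 q a b s j *\<^sub>v v = 0\<^sub>v q"
  let ?w = "Elast q j - Elead q j * (minv (H2 q a b s (j-1)) * (Y2 q a b s j))"
  have w: "?w \<in> carrier_mat ((j+1)*q) q" using minv_H2_pred_carrier Y2_carrier[of q a b s j]
    by (intro minus_carrier_mat mult_carrier_mat[of _ _ "j*q"]) auto
  have "H2 q a b s j *\<^sub>v (?w *\<^sub>v v) = (H2 q a b s j * ?w) *\<^sub>v v"
    using w v H2_carrier[of q a b s j] by (simp add: assoc_mult_mat_vec)
  also have "\<dots> = Elast q j *\<^sub>v (Hhat2 q a b s j *\<^sub>v v)"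
    using block_split.mult_schur_column[OF H2_block_split] Hhat2_carrier v
    by (simp add: Hhat2_eq assoc_mult_mat_vec[of _ "(j+1)*q" q _ q])
  finally have "H2 q a b s j *\<^sub>v (?w *\<^sub>v v) = 0\<^sub>v ((j+1)*q)"
    using Hv mult_mat_vec_zero[of "Elast q j"] by simp
  then have wv: "?w *\<^sub>v v = 0\<^sub>v ((j+1)*q)"
    using H2_kernel_trivial[OF jn] w v by simp
  have "mat_adjoint (Elast q j) * ?w = 1\<^sub>m q"
    using minv_H2_pred_carrier Y2_carrier[of q a b s j] embed_mat_orthonormal[of "j*q" q "(j+1)*q"]
    by (simp add: mat_dim_simps flip: assoc_mult_dim)
  then have "v = mat_adjoint (Elast q j) *\<^sub>v (?w *\<^sub>v v)"
    using w v by (simp flip: assoc_mult_mat_vec[of _ q "(j+1)*q" _ q])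
  then show "v = 0\<^sub>v q" using wv mult_mat_vec_zero[of "mat_adjoint (Elast q j)"] by simp
qed

lemma Hhat2_inverse: "minv (Hhat2 q a b s j) \<in> carrier_mat q q" "Hhat2 q a b s j * minv (Hhat2 q a b s j) = 1\<^sub>m q"
  using minv_inverse[OF Hhat2_carrier det_Hhat2_nonzero] by simp_all

lemma rowP_eq: "rowP q a b s j = mat_adjoint (Elast q j) - mat_adjoint (Y2 q a b s j) * (minv (H2 q a b s (j-1)) * mat_adjoint (Elead q j))"
proof -
  have c: "- (mat_adjoint (Y2 q a b s j) * minv (H2 q a b s (j-1))) \<in> carrier_mat q (j*q)" using minv_H2_pred_carrier Y2_carrier[of q a b s j] by auto
  show ?thesis using minv_H2_pred_carrier Y2_carrier[of q a b s j] unfolding rowP_def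
    by (subst hcat_eq_embed_mat[of "(j+1)*q" "j*q" q, OF _ c one_carrier_mat])
      (auto simp: mat_dim_simps intro!: eq_matI)
qed

lemma mat_adjoint_rowP: "mat_adjoint (rowP q a b s j) = Elast q j - Elead q j * (minv (H2 q a b s (j-1)) * (Y2 q a b s j))"
proof -
  have G: "mat_adjoint (minv (H2 q a b s (j-1))) = minv (H2 q a b s (j-1))"
    using mat_adjoint_minv_H2[of "j-1"] jn by simp
  have "mat_adjoint (minv (H2 q a b s (j-1)) * mat_adjoint (Elead q j)) = Elead q j * minv (H2 q a b s (j-1))"
    using mat_adjoint_mult[OF minv_H2_pred_carrier, of "mat_adjoint (Elead q j)" "(j+1)*q"] G by simp
  then have "mat_adjoint (mat_adjoint (Y2 q a b s j) * (minv (H2 q a b s (j-1)) * mat_adjoint (Elead q j))) = Elead q j * (minv (H2 q a b s (j-1)) * (Y2 q a b s j))"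
    using minv_H2_pred_carrier Y2_carrier[of q a b s j]
      mat_adjoint_mult[of "mat_adjoint (Y2 q a b s j)" q "j*q" "minv (H2 q a b s (j-1)) * mat_adjoint (Elead q j)" "(j+1)*q"]
    by (simp add: assoc_mult_dim)
  then show ?thesis unfolding rowP_eq using minv_H2_pred_carrier Y2_carrier[of q a b s j]
    by (subst mat_adjoint_minus[of _ q "(j+1)*q"]) auto
qed

lemma minv_H2_schur:
  "minv (H2 q a b s j) = Elead q j * (minv (H2 q a b s (j-1)) * mat_adjoint (Elead q j))
     + mat_adjoint (rowP q a b s j) * (minv (Hhat2 q a b s j) * rowP q a b s j)"
proof (rule minv_eqI[OF H2_carrier])
  show "H2 q a b s j * (Elead q j * (minv (H2 q a b s (j-1)) * mat_adjoint (Elead q j))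
      + mat_adjoint (rowP q a b s j) * (minv (Hhat2 q a b s j) * rowP q a b s j)) = 1\<^sub>m ((j+1)*q)"
    unfolding mat_adjoint_rowP unfolding rowP_eq
    by (rule block_split.schur_complement_inverse[OF H2_block_split Hhat2_inverse(1)])
      (use Hhat2_inverse(2) in \<open>simp add: Hhat2_eq\<close>)
  show "Elead q j * (minv (H2 q a b s (j-1)) * mat_adjoint (Elead q j)) + mat_adjoint (rowP q a b s j) * (minv (Hhat2 q a b s j) * rowP q a b s j)
      \<in> carrier_mat ((j+1)*q) ((j+1)*q)"
    using minv_H2_pred_carrier Y2_carrier[of q a b s j] Hhat2_inverse(1)
    by (auto simp: mat_adjoint_rowP rowP_eq intro!: carrier_matI)
qed

end

end


section \<open>The resolvent of the block shift\<close>

definition shift_pencil :: "nat \<Rightarrow> nat \<Rightarrow> complex \<Rightarrow> complex mat" where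
  "shift_pencil q j z = 1\<^sub>m ((j+1)*q) - z \<cdot>\<^sub>m Tm q j"

lemma Tm_carrier: "Tm q j \<in> carrier_mat ((j+1)*q) ((j+1)*q)"
  unfolding Tm_def by (auto simp: block_mat_def)

lemma shift_pencil_carrier: "shift_pencil q j z \<in> carrier_mat ((j+1)*q) ((j+1)*q)"
  unfolding shift_pencil_def by (rule minus_carrier_mat[OF smult_carrier_mat[OF Tm_carrier]])

context
  fixes q :: nat assumes q: "q \<ge> 1"
begin

lemma index_shift_pencil:
  assumes rc: "r < (j+1)*q" "c < (j+1)*q"
  shows "shift_pencil q j z $$ (r,c)
    = (if r = c then 1 else 0) - z * (if r div q = c div q + 1 \<and> r mod q = c mod q then 1 else 0)"
proof -
  have "r mod q < q" "c mod q < q" using q by auto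
  then show ?thesis unfolding shift_pencil_def using rc Tm_carrier[of q j]
    by (simp add: Tm_def index_block_mat)
qed

lemma index_shift_pencil_upper:
  assumes rc: "r \<le> c" "c < (j+1)*q"
  shows "shift_pencil q j z $$ (r,c) = (if r = c then 1 else 0)"
proof -
  have "r div q \<le> c div q" using rc by (simp add: div_le_mono)
  then show ?thesis using index_shift_pencil rc by auto
qed

lemma det_shift_pencil: "det (shift_pencil q j z) = 1"
proof -
  have "det (shift_pencil q j z) = prod_list (diag_mat (shift_pencil q j z))"
    by (rule det_lower_triangular[OF _ shift_pencil_carrier]) (use index_shift_pencil_upper in auto)
  also have "\<dots> = (\<Prod>i = 0..<(j+1)*q. shift_pencil q j z $$ (i,i))"
    using shift_pencil_carrier[of q j z] by (simp add: prod_list_diag_prod)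
  also have "\<dots> = 1" by (rule prod.neutral) (use index_shift_pencil_upper in auto)
  finally show ?thesis .
qed

lemma Rm_inverse:
  "Rm q j z \<in> carrier_mat ((j+1)*q) ((j+1)*q)"
  "shift_pencil q j z * Rm q j z = 1\<^sub>m ((j+1)*q)"
  "Rm q j z * shift_pencil q j z = 1\<^sub>m ((j+1)*q)"
  using minv_inverse[OF shift_pencil_carrier, of q j z] det_shift_pencil
  by (simp_all add: Rm_def shift_pencil_def)

lemma adjoint_Elead_shift_pencil:
  "mat_adjoint (Elead q (Suc i)) * shift_pencil q (Suc i) z = shift_pencil q i z * mat_adjoint (Elead q (Suc i))"
proof -
  let ?j = "Suc i"
  have "mat_adjoint (Elead q ?j) * shift_pencil q ?j z = mat (?j*q) ((?j+1)*q) (\<lambda>(r,c). shift_pencil q ?j z $$ (0+r, c))"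
    by (rule adjoint_embed_mat_mult[OF shift_pencil_carrier]) simp
  also have "\<dots> = mat (?j*q) ((?j+1)*q) (\<lambda>(r,c). if c < ?j*q then shift_pencil q i z $$ (r,c) else 0)"
  proof (rule eq_matI)
    fix r c assume "r < dim_row (mat (?j*q) ((?j+1)*q) (\<lambda>(r,c). if c < ?j*q then shift_pencil q i z $$ (r,c) else 0))"
      "c < dim_col (mat (?j*q) ((?j+1)*q) (\<lambda>(r,c). if c < ?j*q then shift_pencil q i z $$ (r,c) else 0))"
    then have rc: "r < ?j*q" "c < (?j+1)*q" by auto
    show "mat (?j*q) ((?j+1)*q) (\<lambda>(r,c). shift_pencil q ?j z $$ (0+r, c)) $$ (r,c)
      = mat (?j*q) ((?j+1)*q) (\<lambda>(r,c). if c < ?j*q then shift_pencil q i z $$ (r,c) else 0) $$ (r,c)"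
    proof (cases "c < ?j*q")
      case True
      then show ?thesis using rc index_shift_pencil[of r ?j c] index_shift_pencil[of r i c] by simp
    next
      case False
      then show ?thesis using rc index_shift_pencil_upper[of r c ?j] by simp
    qed
  qed auto
  also have "\<dots> = shift_pencil q i z * mat_adjoint (Elead q ?j)"
    using shift_pencil_carrier[of q i z] by (subst mult_adjoint_embed_mat) auto
  finally show ?thesis .
qed

lemma adjoint_Elead_Rm:
  "mat_adjoint (Elead q (Suc i)) * Rm q (Suc i) z = Rm q i z * mat_adjoint (Elead q (Suc i))"
proof -
  let ?E = "mat_adjoint (Elead q (Suc i))" and ?P = "shift_pencil q (Suc i) z" and ?P' = "shift_pencil q i z"
  note R = Rm_inverse[of "Suc i" z] and R' = Rm_inverse[of i z]
  have [simp]: "dim_row (Rm q (Suc i) z) = (Suc i + 1)*q" "dim_col (Rm q (Suc i) z) = (Suc i + 1)*q"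
    "dim_row (Rm q i z) = Suc i*q" "dim_col (Rm q i z) = Suc i*q"
    "dim_row ?P = (Suc i + 1)*q" "dim_col ?P = (Suc i + 1)*q" "dim_row ?P' = Suc i*q" "dim_col ?P' = Suc i*q"
    using R(1) R'(1) shift_pencil_carrier[of q "Suc i" z] shift_pencil_carrier[of q i z] by auto
  have "?E * Rm q (Suc i) z = (Rm q i z * ?P') * (?E * Rm q (Suc i) z)" using R'(3) by simp
  also have "\<dots> = Rm q i z * ((?P' * ?E) * Rm q (Suc i) z)" by (simp add: assoc_mult_dim)
  also have "\<dots> = Rm q i z * ((?E * ?P) * Rm q (Suc i) z)" by (simp only: adjoint_Elead_shift_pencil)
  also have "\<dots> = Rm q i z * (?E * (?P * Rm q (Suc i) z))" by (simp add: assoc_mult_dim)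
  also have "\<dots> = Rm q i z * ?E" using R(2) by simp
  finally show ?thesis .
qed

end


section \<open>Recursion for the entries of \<open>U\<^sub>2\<close>\<close>

locale U2_step = pos_hankel_data +
  fixes j :: nat
  assumes j1: "1 \<le> j" and jn: "j < n"
begin

abbreviation "W \<equiv> rowP q a b s j"
abbreviation "G \<equiv> minv (H2 q a b s (j-1))"
abbreviation "K \<equiv> minv (Hhat2 q a b s j)"
abbreviation "E \<equiv> Elead q j"

lemma j_pred [simp]: "Suc (j - Suc 0) = j"
  using j1 by simp

lemma dim_Rm [simp]:
  "dim_row (Rm q j z) = q + j*q" "dim_col (Rm q j z) = q + j*q"
  "dim_row (Rm q (j-1) z) = j*q" "dim_col (Rm q (j-1) z) = j*q"
  using Rm_inverse(1)[OF q, of j z] Rm_inverse(1)[OF q, of "j-1" z] j_pred by auto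

lemmas dim_Rm' [simp] = dim_Rm[simplified]

lemma dims [simp]:
  "dim_row G = j*q" "dim_col G = j*q" "dim_row K = q" "dim_col K = q"
  "dim_row W = q" "dim_col W = q + j*q"
  "dim_row (Y2 q a b s j) = j*q" "dim_col (Y2 q a b s j) = q"
  "dim_row (s 0) = q" "dim_col (s 0) = q"
  "dim_row (vm q j) = q + j*q" "dim_col (vm q j) = q"
  "dim_row (u2 q a b s j) = q + j*q" "dim_col (u2 q a b s j) = q"
  "dim_row (vm q (j-1)) = j*q" "dim_col (vm q (j-1)) = q"
  "dim_row (u2 q a b s (j-1)) = j*q" "dim_col (u2 q a b s (j-1)) = q"
  "dim_row (Mid q a b s (j-1) z) = j*q" "dim_col (Mid q a b s (j-1) z) = j*q"
  using minv_H2_pred_carrier[OF j1 jn] Hhat2_inverse(1)[OF j1 jn]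
    Y2_carrier[of q a b s j] s_dim[of 0] j_pred
  by (auto simp: rowP_def hcat_def vm_def u2_def block_col_def Mid_def)

lemmas dims' [simp] = dims[simplified]

lemma adjoint_Elead_Rm': "mat_adjoint E * Rm q j z = Rm q (j-1) z * mat_adjoint E"
proof -
  obtain i where "j = Suc i" using j1 by (cases j) auto
  then show ?thesis using adjoint_Elead_Rm[OF q, of i z] by simp
qed

lemma Rm_adjoint_Elead: "mat_adjoint (Rm q j z) * E = E * mat_adjoint (Rm q (j-1) z)"
proof -
  have "mat_adjoint (mat_adjoint E * Rm q j z) = mat_adjoint (Rm q (j-1) z * mat_adjoint E)"
    using adjoint_Elead_Rm' by simp
  moreover have "mat_adjoint (mat_adjoint E * Rm q j z) = mat_adjoint (Rm q j z) * E"
    by (subst mat_adjoint_mult[of _ "j*q" "(j+1)*q" _ "(j+1)*q"]) (auto intro: carrier_matI)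
  moreover have "mat_adjoint (Rm q (j-1) z * mat_adjoint E) = E * mat_adjoint (Rm q (j-1) z)"
    by (subst mat_adjoint_mult[of _ "j*q" "j*q" _ "(j+1)*q"]) (auto intro: carrier_matI)
  ultimately show ?thesis by simp
qed

lemma Mid_split:
  "Mid q a b s j z = E * (Mid q a b s (j-1) z * mat_adjoint E)
     + mat_adjoint (W * Rm q j (cnj z)) * (K * (W * Rm q j (complex_of_real a)))"
proof -
  let ?X = "Rm q j (cnj z)" and ?Z = "Rm q j (complex_of_real a)"
  let ?X' = "Rm q (j-1) (cnj z)" and ?Z' = "Rm q (j-1) (complex_of_real a)"
  have R1: "dim_row T = j*q \<Longrightarrow> mat_adjoint ?X * (E * T) = E * (mat_adjoint ?X' * T)" for T
    by (simp add: Rm_adjoint_Elead[simplified] flip: assoc_mult_dim)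
  have R2: "dim_row T = q + j*q \<Longrightarrow> mat_adjoint E * (?Z * T) = ?Z' * (mat_adjoint E * T)" for T
    using adjoint_Elead_Rm'[of "complex_of_real a", simplified] by (simp flip: assoc_mult_dim)
  have "mat_adjoint (W * ?X) = mat_adjoint ?X * mat_adjoint W"
    by (rule mat_adjoint_mult[of _ q "q + j*q" _ "q + j*q"]) (auto intro: carrier_matI)
  then have R3: "dim_row T = q \<Longrightarrow> mat_adjoint ?X * (mat_adjoint W * T) = mat_adjoint (W * ?X) * T" for T
    by (simp add: assoc_mult_dim)
  show ?thesis
    unfolding Mid_def minv_H2_schur[OF j1 jn]
    by (simp add: mat_dim_simps R1[simplified] R2[simplified] R3 adjoint_Elead_Rm'[simplified])
qed

lemma Mid_sandwich:
  assumes L: "dim_row L = q" "dim_col L = q + j*q" and C: "dim_row C = q + j*q" "dim_col C = q"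
  shows "L * Mid q a b s j z * C = L * E * Mid q a b s (j-1) z * (mat_adjoint E * C)
    + mat_adjoint (W * (Rm q j (cnj z) * mat_adjoint L)) * K * (W * (Rm q j (complex_of_real a) * C))"
proof -
  let ?X = "Rm q j (cnj z)"
  have WX: "mat_adjoint (W * ?X) = mat_adjoint ?X * mat_adjoint W"
    by (rule mat_adjoint_mult[of _ q "q + j*q" _ "q + j*q"]) (auto intro: carrier_matI)
  have "mat_adjoint (W * (?X * mat_adjoint L)) = mat_adjoint (?X * mat_adjoint L) * mat_adjoint W"
    by (rule mat_adjoint_mult[of _ q "q + j*q" _ q]; intro carrier_matI; simp add: L)
  also have "mat_adjoint (?X * mat_adjoint L) = L * mat_adjoint ?X"
    by (subst mat_adjoint_mult[of _ "q + j*q" "q + j*q" _ q]; (intro carrier_matI)?; simp add: L)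
  also have "L * mat_adjoint ?X * mat_adjoint W = L * mat_adjoint (W * ?X)"
    using L by (simp add: WX assoc_mult_dim)
  finally have "mat_adjoint (W * (?X * mat_adjoint L)) = L * mat_adjoint (W * ?X)" .
  then show ?thesis unfolding Mid_split using L C by (simp add: mat_dim_simps)
qed

lemma adjoint_Elead_vm: "mat_adjoint E * vm q j = vm q (j-1)"
  using adjoint_embed_mat_block_col[of j q] by (simp add: vm_def)

lemma adjoint_Elead_u2: "mat_adjoint E * u2 q a b s j = u2 q a b s (j-1)"
  using adjoint_embed_mat_block_col[of j q] by (simp add: u2_def)

lemma adjoint_mult_Elead:
  "dim_row X = q + j*q \<Longrightarrow> mat_adjoint X * E = mat_adjoint (mat_adjoint E * X)"
  by (subst mat_adjoint_mult[of _ "j*q" "q + j*q" _ "dim_col X"]) (auto intro!: carrier_matI)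

lemma adjoint_vm_Elead: "mat_adjoint (vm q j) * E = mat_adjoint (vm q (j-1))"
  by (simp add: adjoint_mult_Elead[simplified] adjoint_Elead_vm[simplified])

lemma Lrow_Elead: "Lrow q a b s j z * E = Lrow q a b s (j-1) z"
  unfolding Lrow_def
  by (simp add: mat_dim_simps adjoint_mult_Elead[simplified] adjoint_Elead_vm[simplified] adjoint_Elead_u2[simplified])

lemma adjoint_Elead_Rcol: "mat_adjoint E * Rcol q a b s j = Rcol q a b s (j-1)"
  unfolding Rcol_def using adjoint_Elead_vm adjoint_Elead_u2 by (simp add: mat_dim_simps flip: assoc_mult_dim)

lemma mat_adjoint_Lrow: "mat_adjoint (Lrow q a b s j z) = u2 q a b s j + cnj z \<cdot>\<^sub>m (vm q j * s 0)"
proof -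
  have "mat_adjoint (s 0) = s 0" using s_herm[of 0] by (simp add: hermitian_def)
  then have "mat_adjoint (s 0 * mat_adjoint (vm q j)) = vm q j * s 0"
    by (subst mat_adjoint_mult[of _ q q _ "q + j*q"]) (auto intro!: carrier_matI)
  then show ?thesis unfolding Lrow_def
    by (subst mat_adjoint_add[of _ q "q + j*q"]) (auto intro!: carrier_matI simp: mat_adjoint_smult)
qed

lemma rowP_Rm_adjoint_Lrow: "W * (Rm q j (cnj z) * mat_adjoint (Lrow q a b s j z)) = - Q2 q a b s j (cnj z)"
  unfolding mat_adjoint_Lrow Q2_def using j1 by (simp add: assoc_mult_dim)

lemma rowP_Rm_vm: "W * (Rm q j w * vm q j) = P2 q a b s j w"
  unfolding P2_def using j1 by (simp add: assoc_mult_dim)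

lemma rowP_Rm_Rcol: "W * (Rm q j (complex_of_real a) * Rcol q a b s j) = - Q2 q a b s j (complex_of_real a)"
  unfolding Q2_def Rcol_def using j1 by (simp add: assoc_mult_dim)

lemma dims_entries [simp]:
  "dim_row (Q2 q a b s j w) = q" "dim_col (Q2 q a b s j w) = q"
  "dim_row (P2 q a b s j w) = q" "dim_col (P2 q a b s j w) = q"
  "dim_row (Lrow q a b s j z) = q" "dim_col (Lrow q a b s j z) = q + j*q"
  "dim_row (Rcol q a b s j) = q + j*q" "dim_col (Rcol q a b s j) = q"
  "dim_row (Lrow q a b s (j - 1) z) = q" "dim_col (Lrow q a b s (j - 1) z) = j*q"
  "dim_row (Rcol q a b s (j - 1)) = j*q" "dim_col (Rcol q a b s (j - 1)) = q"
  using j1 by (auto simp: Q2_def P2_def Lrow_def Rcol_def)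

lemmas dims_entries' [simp] = dims_entries[simplified]

lemma alpha2_step:
  "alpha2 q a b s j z = alpha2 q a b s (j-1) z + (z - complex_of_real a) \<cdot>\<^sub>m
     (mat_adjoint (Q2 q a b s j (cnj z)) * K * P2 q a b s j (complex_of_real a))"
proof -
  have "Lrow q a b s j z * Mid q a b s j z * vm q j = Lrow q a b s (j-1) z * Mid q a b s (j-1) z * vm q (j-1)
      + mat_adjoint (- Q2 q a b s j (cnj z)) * K * P2 q a b s j (complex_of_real a)"
    by (subst Mid_sandwich) (simp_all add: Lrow_Elead[simplified] adjoint_Elead_vm[simplified]
        rowP_Rm_adjoint_Lrow rowP_Rm_vm)
  then show ?thesis unfolding alpha2_def
    by (intro eq_matI) (auto simp: mat_adjoint_uminus uminus_mult_left_dim algebra_simps)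
qed

lemma beta2_step:
  "beta2 q a b s j z = beta2 q a b s (j-1) z + (z - complex_of_real a) \<cdot>\<^sub>m
     (mat_adjoint (Q2 q a b s j (cnj z)) * K * Q2 q a b s j (complex_of_real a))"
proof -
  have "Lrow q a b s j z * Mid q a b s j z * Rcol q a b s j = Lrow q a b s (j-1) z * Mid q a b s (j-1) z * Rcol q a b s (j-1)
      + mat_adjoint (- Q2 q a b s j (cnj z)) * K * (- Q2 q a b s j (complex_of_real a))"
    by (subst Mid_sandwich) (simp_all add: Lrow_Elead[simplified] adjoint_Elead_Rcol[simplified]
        rowP_Rm_adjoint_Lrow rowP_Rm_Rcol)
  then show ?thesis unfolding beta2_def
    by (intro eq_matI) (auto simp: mat_adjoint_uminus uminus_mult_left_dim uminus_mult_right_dim algebra_simps)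
qed

lemma gamma2_step:
  "gamma2 q a b s j z = gamma2 q a b s (j-1) z - (z - complex_of_real a) \<cdot>\<^sub>m
     (mat_adjoint (P2 q a b s j (cnj z)) * K * P2 q a b s j (complex_of_real a))"
proof -
  have "mat_adjoint (vm q j) * Mid q a b s j z * vm q j = mat_adjoint (vm q (j-1)) * Mid q a b s (j-1) z * vm q (j-1)
      + mat_adjoint (P2 q a b s j (cnj z)) * K * P2 q a b s j (complex_of_real a)"
    by (subst Mid_sandwich) (simp_all add: adjoint_vm_Elead[simplified] adjoint_Elead_vm[simplified] rowP_Rm_vm)
  then show ?thesis unfolding gamma2_def
    by (intro eq_matI) (auto simp: algebra_simps)
qed

lemma delta2_step:
  "delta2 q a b s j z = delta2 q a b s (j-1) z - (z - complex_of_real a) \<cdot>\<^sub>m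
     (mat_adjoint (P2 q a b s j (cnj z)) * K * Q2 q a b s j (complex_of_real a))"
proof -
  have "mat_adjoint (vm q j) * Mid q a b s j z * Rcol q a b s j = mat_adjoint (vm q (j-1)) * Mid q a b s (j-1) z * Rcol q a b s (j-1)
      + mat_adjoint (P2 q a b s j (cnj z)) * K * (- Q2 q a b s j (complex_of_real a))"
    by (subst Mid_sandwich) (simp_all add: adjoint_vm_Elead[simplified] adjoint_Elead_Rcol[simplified]
        rowP_Rm_vm rowP_Rm_Rcol)
  then show ?thesis unfolding delta2_def
    by (intro eq_matI) (auto simp: uminus_mult_right_dim algebra_simps)
qed

end

theorem mainTheorem1:
  fixes q n :: nat and a b :: real and s :: "nat \<Rightarrow> complex mat"
  assumes q: "q \<ge> 1"
    and ab: "a < b"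
    and s_dim: "\<And>k. k \<le> 2*n+1 \<Longrightarrow> s k \<in> carrier_mat q q"
    and s_herm: "\<And>k. k \<le> 2*n+1 \<Longrightarrow> hermitian (s k)"
    and pd1: "pos_def (H1 q s n)"
    and pd2: "pos_def (H2 q a b s (n-1))"
    and pd3: "pos_def (K1 q b s n)"
    and pd4: "pos_def (K2 q a s n)"
    and j: "1 \<le> j" "j \<le> n - 1"
  shows "alpha2 q a b s j z = alpha2 q a b s (j-1) z
            + (z - complex_of_real a) \<cdot>\<^sub>m (mat_adjoint (Q2 q a b s j (cnj z))
                 * minv (Hhat2 q a b s j) * P2 q a b s j (complex_of_real a))
       \<and> beta2 q a b s j z = beta2 q a b s (j-1) z
            + (z - complex_of_real a) \<cdot>\<^sub>m (mat_adjoint (Q2 q a b s j (cnj z))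
                 * minv (Hhat2 q a b s j) * Q2 q a b s j (complex_of_real a))
       \<and> gamma2 q a b s j z = gamma2 q a b s (j-1) z
            - (z - complex_of_real a) \<cdot>\<^sub>m (mat_adjoint (P2 q a b s j (cnj z))
                 * minv (Hhat2 q a b s j) * P2 q a b s j (complex_of_real a))
       \<and> delta2 q a b s j z = delta2 q a b s (j-1) z
            - (z - complex_of_real a) \<cdot>\<^sub>m (mat_adjoint (P2 q a b s j (cnj z))
                 * minv (Hhat2 q a b s j) * Q2 q a b s j (complex_of_real a))"
proof -
  interpret U2_step q n a b s j
    by unfold_locales (use q s_dim s_herm pd2 j in auto)
  show ?thesis using alpha2_step beta2_step gamma2_step delta2_step by blast
qed

end
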